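(* Let $T$ be a finite set of triples and $Q$ a finite nonempty set of queries. For each $q \in Q$ let $T_q \subseteq T$ be nonempty and $f_q(t) = \mathbb{I}[t\in T_q]$. Define $c_t = \sum_{q\in Q} f_q(t)$, $\mathrm{cost}(G,Q) = \sum_{t\in T} c_t$, the sensitivity $s(t) = \sum_{q\in Q}\frac{1}{|T_q|}\mathbb{I}[t\in T_q]$, $S = \sum_{t\in T} s(t)$, and the sampling probability $p(t) = s(t)/S$. Let $m\ge 1$, draw $m$ triples independently from $T$ according to $p$, let $X_t$ be the number of times $t$ is drawn, and let $w(t) = \frac{1}{m\,p(t)}$ for triples with $p(t)>0$. Define $\mathrm{cost}(C,Q) = \sum_{t \in T:\, X_t>0} X_t\, w(t)\, c_t$. Then \begin{enumerate} \item $\mathbb{E}[\mathrm{cost}(C,Q)] = \mathrm{cost}(G,Q)$; \item $\operatorname{Var}[\mathrm{cost}(C,Q)] \leq \frac{|Q|}{m}\,\mathrm{cost}(G,Q)^2$. \end{enumerate}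
   Context: $T$ is the triple set of a knowledge graph $G$, $Q$ a user-specific query workload, and $T_q$ the set of triples relevant to query $q$. Triples with $s(t)=0$ (equivalently $c_t = 0$) are never sampled. Thus $X_t \sim \mathrm{Binomial}(m,p(t))$. *)

theory Defs
  imports "HOL-Probability.Probability"
begin

definition f_q :: "('q \<Rightarrow> 'a set) \<Rightarrow> 'q \<Rightarrow> 'a \<Rightarrow> real" where
  "f_q Tq q t = (if t \<in> Tq q then 1 else 0)"

definition c_t :: "'q set \<Rightarrow> ('q \<Rightarrow> 'a set) \<Rightarrow> 'a \<Rightarrow> real" where
  "c_t Q Tq t = (\<Sum>q\<in>Q. f_q Tq q t)"

definition cost_G :: "'a set \<Rightarrow> 'q set \<Rightarrow> ('q \<Rightarrow> 'a set) \<Rightarrow> real" where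
  "cost_G T Q Tq = (\<Sum>t\<in>T. c_t Q Tq t)"

definition sens :: "'q set \<Rightarrow> ('q \<Rightarrow> 'a set) \<Rightarrow> 'a \<Rightarrow> real" where
  "sens Q Tq t = (\<Sum>q\<in>Q. (1 / real (card (Tq q))) * f_q Tq q t)"

definition total_sens :: "'a set \<Rightarrow> 'q set \<Rightarrow> ('q \<Rightarrow> 'a set) \<Rightarrow> real" where
  "total_sens T Q Tq = (\<Sum>t\<in>T. sens Q Tq t)"

definition samp_prob :: "'a set \<Rightarrow> 'q set \<Rightarrow> ('q \<Rightarrow> 'a set) \<Rightarrow> 'a \<Rightarrow> real" where
  "samp_prob T Q Tq t = sens Q Tq t / total_sens T Q Tq"

text \<open>X_t: number of times t is drawn in the sample (a list of m draws).\<close>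
definition draw_count :: "'a list \<Rightarrow> 'a \<Rightarrow> nat" where
  "draw_count xs t = count_list xs t"

definition weight :: "'a set \<Rightarrow> 'q set \<Rightarrow> ('q \<Rightarrow> 'a set) \<Rightarrow> nat \<Rightarrow> 'a \<Rightarrow> real" where
  "weight T Q Tq m t = 1 / (real m * samp_prob T Q Tq t)"

definition cost_C :: "'a set \<Rightarrow> 'q set \<Rightarrow> ('q \<Rightarrow> 'a set) \<Rightarrow> nat \<Rightarrow> 'a list \<Rightarrow> real" where
  "cost_C T Q Tq m xs =
     (\<Sum>t\<in>{t\<in>T. draw_count xs t > 0}.
        real (draw_count xs t) * weight T Q Tq m t * c_t Q Tq t)"

end

(*
  cost(C,Q) is the sum of m independent copies of Y = w(x) c_x with x drawn according to p.
  Since p(t) w(t) = 1/m, E[Y] = cost(G,Q)/m, and Var[cost(C,Q)] = m Var[Y] <= m E[Y^2]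
  = (1/m) sum_t c_t^2 / p(t) = (|Q|/m) sum_t c_t (c_t / s(t)), using S = |Q|.
  Every |T_q| is at most cost(G,Q) = sum_q |T_q|, so s(t) >= c_t / cost(G,Q), which gives the bound.
*)
theory Submission
  imports Defs
begin

lemma finite_set_replicate_pmf:
  "finite (set_pmf D) \<Longrightarrow> finite (set_pmf (replicate_pmf n D))"
  unfolding set_replicate_pmf lists_eq_set using finite_lists_length_eq by auto

lemma integrable_replicate_pmf:
  fixes f :: "'a list \<Rightarrow> 'b::{banach, second_countable_topology}"
  shows "finite (set_pmf D) \<Longrightarrow> integrable (replicate_pmf n D) f"
  by (intro integrable_measure_pmf_finite finite_set_replicate_pmf)

lemma expectation_replicate_pmf_Suc:
  fixes g :: "'a list \<Rightarrow> real"
  assumes fin: "finite (set_pmf D)"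
  shows "measure_pmf.expectation (replicate_pmf (Suc n) D) g =
    measure_pmf.expectation D (\<lambda>x. measure_pmf.expectation (replicate_pmf n D) (\<lambda>xs. g (x # xs)))"
proof -
  have "replicate_pmf (Suc n) D = D \<bind> (\<lambda>x. map_pmf (Cons x) (replicate_pmf n D))"
    by (simp add: map_pmf_def)
  then show ?thesis
    using fin finite_set_replicate_pmf[OF fin]
    by (simp add: pmf_expectation_bind[of "set_pmf D"] integral_measure_pmf[of "set_pmf D"])
qed

lemma expectation_sum_list_replicate_pmf:
  fixes h :: "'a \<Rightarrow> real"
  assumes fin: "finite (set_pmf D)"
  shows "measure_pmf.expectation (replicate_pmf n D) (\<lambda>xs. \<Sum>x\<leftarrow>xs. h x)
     = real n * measure_pmf.expectation D h"
proof (induction n)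
  case (Suc n)
  note int = integrable_measure_pmf_finite[OF fin] integrable_replicate_pmf[OF fin]
  have "measure_pmf.expectation (replicate_pmf (Suc n) D) (\<lambda>xs. \<Sum>x\<leftarrow>xs. h x)
      = measure_pmf.expectation D
          (\<lambda>x. measure_pmf.expectation (replicate_pmf n D) (\<lambda>xs. h x + (\<Sum>x\<leftarrow>xs. h x)))"
    by (simp only: expectation_replicate_pmf_Suc[OF fin] list.map sum_list.Cons)
  also have "\<dots> = measure_pmf.expectation D (\<lambda>x. h x + real n * measure_pmf.expectation D h)"
    by (simp add: int Suc)
  finally show ?case
    by (simp add: int algebra_simps)
qed simp

lemma expectation_sum_list_squared_replicate_pmf:
  fixes h :: "'a \<Rightarrow> real"
  assumes fin: "finite (set_pmf D)"
  shows "measure_pmf.expectation (replicate_pmf n D) (\<lambda>xs. (\<Sum>x\<leftarrow>xs. h x)\<^sup>2)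
     = real n * measure_pmf.expectation D (\<lambda>x. (h x)\<^sup>2)
       + real n * (real n - 1) * (measure_pmf.expectation D h)\<^sup>2"
proof (induction n)
  case (Suc n)
  note int = integrable_measure_pmf_finite[OF fin] integrable_replicate_pmf[OF fin]
  let ?E1 = "measure_pmf.expectation D h" and ?E2 = "measure_pmf.expectation D (\<lambda>x. (h x)\<^sup>2)"
  have "measure_pmf.expectation (replicate_pmf (Suc n) D) (\<lambda>xs. (\<Sum>x\<leftarrow>xs. h x)\<^sup>2)
      = measure_pmf.expectation D (\<lambda>x. measure_pmf.expectation (replicate_pmf n D)
          (\<lambda>xs. (h x)\<^sup>2 + 2 * h x * (\<Sum>x\<leftarrow>xs. h x) + (\<Sum>x\<leftarrow>xs. h x)\<^sup>2))"
    by (simp only: expectation_replicate_pmf_Suc[OF fin] list.map sum_list.Cons power2_sum add_ac)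
  also have "\<dots> = measure_pmf.expectation D (\<lambda>x. (h x)\<^sup>2 + 2 * h x * (real n * ?E1)
      + (real n * ?E2 + real n * (real n - 1) * ?E1\<^sup>2))"
    by (simp add: int Suc expectation_sum_list_replicate_pmf[OF fin])
  finally show ?case
    by (simp add: int algebra_simps power2_eq_square)
qed simp

lemma variance_sum_list_replicate_pmf:
  fixes h :: "'a \<Rightarrow> real"
  assumes fin: "finite (set_pmf D)"
  shows "measure_pmf.variance (replicate_pmf n D) (\<lambda>xs. \<Sum>x\<leftarrow>xs. h x)
     = real n * measure_pmf.variance D h"
proof -
  note int = integrable_measure_pmf_finite[OF fin] integrable_replicate_pmf[OF fin]
  have "measure_pmf.variance (replicate_pmf n D) (\<lambda>xs. \<Sum>x\<leftarrow>xs. h x)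
      = measure_pmf.expectation (replicate_pmf n D) (\<lambda>xs. (\<Sum>x\<leftarrow>xs. h x)\<^sup>2)
        - (measure_pmf.expectation (replicate_pmf n D) (\<lambda>xs. \<Sum>x\<leftarrow>xs. h x))\<^sup>2"
    by (intro measure_pmf.variance_eq int)
  also have "\<dots> = real n * measure_pmf.expectation D (\<lambda>x. (h x)\<^sup>2)
        + real n * (real n - 1) * (measure_pmf.expectation D h)\<^sup>2
        - (real n * measure_pmf.expectation D h)\<^sup>2"
    by (simp only: expectation_sum_list_replicate_pmf[OF fin]
        expectation_sum_list_squared_replicate_pmf[OF fin])
  also have "\<dots> = real n * (measure_pmf.expectation D (\<lambda>x. (h x)\<^sup>2) - (measure_pmf.expectation D h)\<^sup>2)"
    by (simp add: algebra_simps power2_eq_square)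
  also have "\<dots> = real n * measure_pmf.variance D h"
    by (simp add: measure_pmf.variance_eq int)
  finally show ?thesis .
qed

lemma sum_count_list_eq_sum_list:
  fixes g :: "'a \<Rightarrow> 'b::comm_semiring_1"
  assumes "finite A"
  shows "(\<Sum>t\<in>A. of_nat (count_list xs t) * g t) = (\<Sum>x\<leftarrow>xs. if x \<in> A then g x else 0)"
proof (induction xs)
  case (Cons x xs)
  have "of_nat (count_list (x # xs) t) * g t = (if x = t then g t else 0) + of_nat (count_list xs t) * g t"
    for t by (simp add: distrib_right)
  then show ?case
    using assms Cons.IH by (simp add: sum.distrib sum.delta)
qed simp

lemma c_t_nonneg: "c_t Q Tq t \<ge> 0"
  unfolding c_t_def f_q_def by (simp add: sum_nonneg)

locale query_workload =
  fixes T :: "'a set" and Q :: "'q set" and Tq :: "'q \<Rightarrow> 'a set"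
  assumes finite_T: "finite T" and finite_Q: "finite Q" and Q_nonempty: "Q \<noteq> {}"
    and Tq_subset: "q \<in> Q \<Longrightarrow> Tq q \<subseteq> T" and Tq_nonempty: "q \<in> Q \<Longrightarrow> Tq q \<noteq> {}"
begin

lemma card_Tq_pos: "q \<in> Q \<Longrightarrow> card (Tq q) > 0"
  using Tq_subset Tq_nonempty finite_T by (meson card_gt_0_iff finite_subset)

lemma sum_f_q_eq_card: "q \<in> Q \<Longrightarrow> (\<Sum>t\<in>T. f_q Tq q t) = real (card (Tq q))"
  using Tq_subset finite_T by (simp add: f_q_def sum.If_cases Int_absorb1)

lemma cost_G_eq_sum_card: "cost_G T Q Tq = (\<Sum>q\<in>Q. real (card (Tq q)))"
  unfolding cost_G_def c_t_def by (subst sum.swap) (simp add: sum_f_q_eq_card)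

lemma total_sens_eq_card: "total_sens T Q Tq = real (card Q)"
proof -
  have "total_sens T Q Tq = (\<Sum>q\<in>Q. (\<Sum>t\<in>T. f_q Tq q t) / real (card (Tq q)))"
    unfolding total_sens_def sens_def by (subst sum.swap) (simp add: sum_divide_distrib)
  also have "\<dots> = (\<Sum>q\<in>Q. 1)"
    by (rule sum.cong) (simp_all add: sum_f_q_eq_card card_Tq_pos)
  finally show ?thesis by simp
qed

lemma c_t_le_cost_G_sens: "c_t Q Tq t \<le> cost_G T Q Tq * sens Q Tq t"
proof -
  have "f_q Tq q t \<le> cost_G T Q Tq * (1 / real (card (Tq q)) * f_q Tq q t)" if q: "q \<in> Q" for q
  proof -
    have "real (card (Tq q)) \<le> cost_G T Q Tq"
      unfolding cost_G_eq_sum_card using q finite_Q by (intro member_le_sum) auto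
    then show ?thesis
      using card_Tq_pos[OF q] by (simp add: f_q_def field_simps)
  qed
  then show ?thesis
    unfolding c_t_def sens_def sum_distrib_left by (intro sum_mono)
qed

lemma cost_G_nonneg: "cost_G T Q Tq \<ge> 0"
  unfolding cost_G_eq_sum_card by (simp add: sum_nonneg)

lemma sens_pos:
  assumes "c_t Q Tq t > 0"
  shows "sens Q Tq t > 0"
proof -
  have "cost_G T Q Tq * sens Q Tq t > 0"
    using assms c_t_le_cost_G_sens[of t] by linarith
  then show ?thesis
    using cost_G_nonneg by (simp add: zero_less_mult_iff)
qed

lemma samp_prob_eq: "samp_prob T Q Tq t = sens Q Tq t / real (card Q)"
  by (simp add: samp_prob_def total_sens_eq_card)

(* If c_t = 0 then p(t) = 0 and weight is the junk value 1/0 = 0; both sides vanish. *)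
lemma samp_prob_mult_weight:
  assumes "m > 0"
  shows "samp_prob T Q Tq t * (weight T Q Tq m t * c_t Q Tq t) = c_t Q Tq t / real m"
proof (cases "c_t Q Tq t = 0")
  case False
  then have "sens Q Tq t > 0"
    using c_t_nonneg[of Q Tq t] by (intro sens_pos) linarith
  then show ?thesis
    using assms finite_Q Q_nonempty by (simp add: weight_def samp_prob_eq card_gt_0_iff field_simps)
qed simp

lemma samp_prob_mult_weight_sq_le:
  assumes "m > 0"
  shows "samp_prob T Q Tq t * (weight T Q Tq m t * c_t Q Tq t)\<^sup>2
    \<le> real (card Q) * cost_G T Q Tq * c_t Q Tq t / (real m)\<^sup>2"
proof (cases "c_t Q Tq t = 0")
  case False
  then have c: "c_t Q Tq t > 0"
    using c_t_nonneg[of Q Tq t] by linarith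
  then have s: "sens Q Tq t > 0"
    by (rule sens_pos)
  have "samp_prob T Q Tq t * (weight T Q Tq m t * c_t Q Tq t)\<^sup>2
      = real (card Q) * (c_t Q Tq t / sens Q Tq t) * c_t Q Tq t / (real m)\<^sup>2"
    using assms finite_Q Q_nonempty s
    by (simp add: weight_def samp_prob_eq card_gt_0_iff field_simps power2_eq_square)
  also have "\<dots> \<le> real (card Q) * cost_G T Q Tq * c_t Q Tq t / (real m)\<^sup>2"
    using c_t_le_cost_G_sens[of t] s c
    by (intro divide_right_mono mult_right_mono mult_left_mono) (simp_all add: field_simps)
  finally show ?thesis .
qed simp

definition draw_cost :: "nat \<Rightarrow> 'a \<Rightarrow> real" where
  "draw_cost m t = (if t \<in> T then weight T Q Tq m t * c_t Q Tq t else 0)"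

lemma cost_C_eq_sum_draw_cost: "cost_C T Q Tq m xs = (\<Sum>x\<leftarrow>xs. draw_cost m x)"
proof -
  have "cost_C T Q Tq m xs = (\<Sum>t\<in>T. real (count_list xs t) * (weight T Q Tq m t * c_t Q Tq t))"
    unfolding cost_C_def draw_count_def mult.assoc
    by (rule sum.mono_neutral_left) (use finite_T in auto)
  then show ?thesis
    unfolding draw_cost_def using finite_T by (simp add: sum_count_list_eq_sum_list)
qed

end

locale sensitivity_sampling = query_workload +
  fixes D :: "'a pmf"
  assumes pmf_D: "pmf D t = (if t \<in> T then samp_prob T Q Tq t else 0)"
begin

lemma finite_set_pmf_D: "finite (set_pmf D)"
  using finite_T pmf_D by (auto simp: set_pmf_iff intro: finite_subset)

lemma expectation_D: "measure_pmf.expectation D f = (\<Sum>t\<in>T. samp_prob T Q Tq t * f t)"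
  using finite_T pmf_D by (subst integral_measure_pmf[of T]) (auto simp: set_pmf_iff split: if_splits)

lemma expectation_draw_cost:
  "m > 0 \<Longrightarrow> measure_pmf.expectation D (draw_cost m) = cost_G T Q Tq / real m"
  by (simp add: expectation_D draw_cost_def samp_prob_mult_weight cost_G_def sum_divide_distrib)

lemma expectation_draw_cost_sq_le:
  assumes "m > 0"
  shows "measure_pmf.expectation D (\<lambda>t. (draw_cost m t)\<^sup>2)
    \<le> real (card Q) * (cost_G T Q Tq)\<^sup>2 / (real m)\<^sup>2"
proof -
  have "measure_pmf.expectation D (\<lambda>t. (draw_cost m t)\<^sup>2)
      \<le> (\<Sum>t\<in>T. real (card Q) * cost_G T Q Tq * c_t Q Tq t / (real m)\<^sup>2)"
    unfolding expectation_D draw_cost_def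
    by (intro sum_mono) (simp add: samp_prob_mult_weight_sq_le assms)
  also have "\<dots> = real (card Q) * (cost_G T Q Tq)\<^sup>2 / (real m)\<^sup>2"
    by (simp add: cost_G_def[of T] sum_distrib_left[symmetric] sum_divide_distrib[symmetric] power2_eq_square)
  finally show ?thesis .
qed

end

theorem mainTheorem3:
  fixes T :: "'a set" and Q :: "'q set" and Tq :: "'q \<Rightarrow> 'a set"
    and m :: nat and D :: "'a pmf"
  assumes "finite T" and "finite Q" and "Q \<noteq> {}"
    and "\<And>q. q \<in> Q \<Longrightarrow> Tq q \<subseteq> T \<and> Tq q \<noteq> {}"
    and "m \<ge> 1"
    and "\<And>t. pmf D t = (if t \<in> T then samp_prob T Q Tq t else 0)"
  shows "measure_pmf.expectation (replicate_pmf m D) (cost_C T Q Tq m) = cost_G T Q Tq \<and>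
         measure_pmf.variance (replicate_pmf m D) (cost_C T Q Tq m)
           \<le> real (card Q) / real m * (cost_G T Q Tq)\<^sup>2"
proof -
  interpret sensitivity_sampling T Q Tq D
    using assms(1-4,6) by unfold_locales auto
  have m: "m > 0"
    using assms(5) by simp
  have cost: "cost_C T Q Tq m = (\<lambda>xs. \<Sum>x\<leftarrow>xs. draw_cost m x)"
    by (intro ext cost_C_eq_sum_draw_cost)
  have "measure_pmf.variance (replicate_pmf m D) (cost_C T Q Tq m)
      = real m * measure_pmf.variance D (draw_cost m)"
    by (simp add: cost variance_sum_list_replicate_pmf finite_set_pmf_D)
  also have "\<dots> \<le> real m * measure_pmf.expectation D (\<lambda>t. (draw_cost m t)\<^sup>2)"
    using finite_set_pmf_D
    by (intro mult_left_mono) (simp_all add: measure_pmf.variance_eq integrable_measure_pmf_finite)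
  also have "\<dots> \<le> real m * (real (card Q) * (cost_G T Q Tq)\<^sup>2 / (real m)\<^sup>2)"
    using m by (intro mult_left_mono expectation_draw_cost_sq_le) simp_all
  also have "\<dots> = real (card Q) / real m * (cost_G T Q Tq)\<^sup>2"
    using m by (simp add: power2_eq_square)
  finally show ?thesis
    using m by (simp add: cost expectation_sum_list_replicate_pmf finite_set_pmf_D expectation_draw_cost)
qed

end
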